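(* Every triangulated polygon $T$ with no interior vertices has a connected scaffold; consequently, $T$ has a facet path.
   Context: A triangulated polygon with no interior vertices is a finite $2$-dimensional simplicial complex homeomorphic to a closed disk all of whose vertices lie on the boundary; its triangles are called facets. The incidence graph of $T$ is the bipartite graph whose nodes are the facets and vertices of $T$, with an arc $(v,f)$ whenever $v$ is a vertex of $f$. A scaffold is a subgraph of the incidence graph containing every facet node, in which every facet node has degree exactly $2$ and at most two vertex nodes have odd degree. A facet path is a trail $(v_0,f_1,v_1,\dots,f_k,v_k)$ in the incidence graph (no arc repeated) containing every facet node exactly once (vertex nodes may repeat). *)

theory Defs
  imports "HOL-Analysis.Analysis"
begin

text \<open>A finite 2-dimensional simplicial complex is represented by its set of facets
(triangles), i.e. 3-element sets of vertices; the complex consists of all their faces.\<close>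

definition verts :: "'v set set \<Rightarrow> 'v set" where
  "verts F = \<Union>F"

definition realization :: "('v::finite) set set \<Rightarrow> (real^'v) set" where
  "realization F = (\<Union>f\<in>F. convex hull ((\<lambda>v. axis v 1) ` f))"

definition triangulated_polygon_no_interior :: "('v::finite) set set \<Rightarrow> bool" where
  "triangulated_polygon_no_interior F \<longleftrightarrow>
     finite F \<and> (\<forall>f\<in>F. card f = 3) \<and>
     (\<exists>h g. homeomorphism (realization F) (cball (0::real^2) 1) h g \<and>
            (\<forall>v\<in>verts F. h (axis v 1) \<in> sphere 0 1))"

text \<open>Nodes of the incidence graph: Inl v for a vertex, Inr f for a facet.
Arcs are pairs (v, f) with v a vertex of f.\<close>

definition incidence_arcs :: "'v set set \<Rightarrow> ('v \<times> 'v set) set" where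
  "incidence_arcs F = {(v, f). f \<in> F \<and> v \<in> f}"

definition vdeg :: "('v \<times> 'v set) set \<Rightarrow> 'v \<Rightarrow> nat" where
  "vdeg S v = card {f. (v, f) \<in> S}"

definition fdeg :: "('v \<times> 'v set) set \<Rightarrow> 'v set \<Rightarrow> nat" where
  "fdeg S f = card {v. (v, f) \<in> S}"

text \<open>A subgraph of the incidence graph is given by a set Vs of vertex nodes and a set S
of arcs whose endpoints are among its nodes; its facet nodes are all facets of F.\<close>

definition scaffold :: "'v set set \<Rightarrow> 'v set \<Rightarrow> ('v \<times> 'v set) set \<Rightarrow> bool" where
  "scaffold F Vs S \<longleftrightarrow>
     Vs \<subseteq> verts F \<and> S \<subseteq> incidence_arcs F \<and> (\<forall>(v, f)\<in>S. v \<in> Vs) \<and>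
     (\<forall>f\<in>F. fdeg S f = 2) \<and>
     card {v\<in>Vs. odd (vdeg S v)} \<le> 2"

definition subgraph_nodes :: "'v set set \<Rightarrow> 'v set \<Rightarrow> ('v + 'v set) set" where
  "subgraph_nodes F Vs = Inl ` Vs \<union> Inr ` F"

definition subgraph_edges :: "('v \<times> 'v set) set \<Rightarrow> (('v + 'v set) \<times> ('v + 'v set)) set" where
  "subgraph_edges S = {(Inl v, Inr f) | v f. (v, f) \<in> S} \<union> {(Inr f, Inl v) | v f. (v, f) \<in> S}"

definition connected_subgraph :: "'v set set \<Rightarrow> 'v set \<Rightarrow> ('v \<times> 'v set) set \<Rightarrow> bool" where
  "connected_subgraph F Vs S \<longleftrightarrow>
     (\<forall>x\<in>subgraph_nodes F Vs. \<forall>y\<in>subgraph_nodes F Vs. (x, y) \<in> (subgraph_edges S)\<^sup>*)"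

text \<open>A facet path (v_0, f_1, v_1, ..., f_k, v_k) is encoded by the list vs = [v_0,...,v_k]
and the list fs = [f_1,...,f_k]; the i-th facet is traversed via the arcs
(vs!i, fs!i) and (vs!(i+1), fs!i).\<close>

definition path_arcs :: "'v list \<Rightarrow> 'v set list \<Rightarrow> ('v \<times> 'v set) list" where
  "path_arcs vs fs = concat (map (\<lambda>i. [(vs ! i, fs ! i), (vs ! Suc i, fs ! i)]) [0..<length fs])"

definition facet_path :: "'v set set \<Rightarrow> 'v list \<Rightarrow> 'v set list \<Rightarrow> bool" where
  "facet_path F vs fs \<longleftrightarrow>
     length vs = Suc (length fs) \<and>
     set (path_arcs vs fs) \<subseteq> incidence_arcs F \<and>
     distinct (path_arcs vs fs) \<and>
     distinct fs \<and> set fs = F"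

end

theory Submission
  imports Defs
begin

text \<open>
  The dual graph of T, in which two triangles are adjacent when they share an edge, is
  connected: removing the finitely many vertices from the disk leaves a connected set, whereas
  the triangles of two different dual components could only meet in vertices.

  Call a sequence v0, f1, v1, ..., fk, vk with distinct triangles fi, each containing the two
  distinct vertices v(i-1) and vi, a trail from v0 to vk. For a dual-connected set of triangles
  and an edge ab of one of its triangles r, induction on the number of triangles shows that the
  triangles can be partitioned into trails from a to b: every dual component of T - {r} is
  attached to r along an edge of r, and the partitions of the components are spliced together
  through r, closed trails being inserted as detours. Concatenating the trails of the partition
  gives a single trail through all triangles, and its arcs form a connected scaffold and a facet
  path.
\<close>

section \<open>Trails through facets\<close>

text \<open>Consecutive vertices are distinct, so that every facet of a trail carries exactly two
  arcs.\<close>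

fun facet_trail :: "'v list \<Rightarrow> 'v set list \<Rightarrow> bool" where
  "facet_trail [v] [] \<longleftrightarrow> True"
| "facet_trail (v # w # vs) (f # fs) \<longleftrightarrow> v \<in> f \<and> w \<in> f \<and> v \<noteq> w \<and> facet_trail (w # vs) fs"
| "facet_trail _ _ \<longleftrightarrow> False"

lemma facet_trail_not_Nil: "facet_trail vs fs \<Longrightarrow> vs \<noteq> []"
  by (cases vs) auto

lemma facet_trail_length: "facet_trail vs fs \<Longrightarrow> length vs = Suc (length fs)"
  by (induction vs fs rule: facet_trail.induct) auto

lemma facet_trail_append:
  "facet_trail vs fs \<Longrightarrow> facet_trail ws gs \<Longrightarrow> last vs = hd ws \<Longrightarrow>
   facet_trail (vs @ tl ws) (fs @ gs)"
proof (induction vs fs rule: facet_trail.induct)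
  case (1 v)
  then show ?case using facet_trail_not_Nil[of ws gs] by (cases ws) auto
qed auto

lemma facet_trail_rev: "facet_trail vs fs \<Longrightarrow> facet_trail (rev vs) (rev fs)"
proof (induction vs fs rule: facet_trail.induct)
  case (2 v w vs f fs)
  then have "facet_trail (rev (w # vs) @ tl [w, v]) (rev fs @ [f])"
    by (intro facet_trail_append) auto
  then show ?case by simp
qed auto

lemma set_facet_trail_subset: "facet_trail vs fs \<Longrightarrow> fs \<noteq> [] \<Longrightarrow> set vs \<subseteq> \<Union>(set fs)"
proof (induction vs fs rule: facet_trail.induct)
  case (2 v w vs f fs)
  then show ?case by (cases fs) (auto elim: facet_trail.elims)
qed auto

definition has_trail :: "'v set set \<Rightarrow> 'v \<Rightarrow> 'v \<Rightarrow> bool" where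
  "has_trail X x y \<longleftrightarrow>
     (\<exists>vs fs. facet_trail vs fs \<and> hd vs = x \<and> last vs = y \<and> distinct fs \<and> set fs = X)"

lemma has_trail_empty: "has_trail {} x x"
  unfolding has_trail_def by (intro exI[of _ "[x]"] exI[of _ "[]"]) simp

lemma has_trail_singleton: "x \<in> f \<Longrightarrow> y \<in> f \<Longrightarrow> x \<noteq> y \<Longrightarrow> has_trail {f} x y"
  unfolding has_trail_def by (intro exI[of _ "[x, y]"] exI[of _ "[f]"]) simp

lemma has_trail_sym: "has_trail X x y \<Longrightarrow> has_trail X y x"
  unfolding has_trail_def
  by (metis facet_trail_rev distinct_rev hd_rev last_rev set_rev)

lemma has_trail_union:
  assumes "has_trail X x y" "has_trail Y y z" "X \<inter> Y = {}"
  shows "has_trail (X \<union> Y) x z"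
proof -
  obtain vs fs where vs: "facet_trail vs fs" "hd vs = x" "last vs = y" "distinct fs" "set fs = X"
    using assms(1) unfolding has_trail_def by blast
  obtain ws gs where ws: "facet_trail ws gs" "hd ws = y" "last ws = z" "distinct gs" "set gs = Y"
    using assms(2) unfolding has_trail_def by blast
  have "hd (vs @ tl ws) = x" using vs facet_trail_not_Nil[OF vs(1)] by simp
  moreover have "last (vs @ tl ws) = z"
    using vs ws facet_trail_not_Nil[OF ws(1)] by (cases ws) (auto simp: last_append)
  ultimately show ?thesis
    unfolding has_trail_def using vs ws assms(3) facet_trail_append[OF vs(1) ws(1)]
    by (intro exI[of _ "vs @ tl ws"] exI[of _ "fs @ gs"]) auto
qed

inductive trail_partition :: "'v set set \<Rightarrow> 'v \<Rightarrow> 'v \<Rightarrow> bool" where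
  empty: "trail_partition {} x y"
| union: "has_trail X x y \<Longrightarrow> trail_partition Y x y \<Longrightarrow> X \<inter> Y = {} \<Longrightarrow>
    trail_partition (X \<union> Y) x y"

lemma trail_partition_trail: "has_trail X x y \<Longrightarrow> trail_partition X x y"
  using trail_partition.union[OF _ trail_partition.empty] by fastforce

lemma trail_partition_sym: "trail_partition X x y \<Longrightarrow> trail_partition X y x"
  by (induction rule: trail_partition.induct) (auto intro: trail_partition.intros has_trail_sym)

lemma trail_partition_union:
  "trail_partition X x y \<Longrightarrow> trail_partition Y x y \<Longrightarrow> X \<inter> Y = {} \<Longrightarrow>
   trail_partition (X \<union> Y) x y"
proof (induction rule: trail_partition.induct)
  case (union X x y Z)
  then have "trail_partition (X \<union> (Z \<union> Y)) x y"
    by (intro trail_partition.union[of X x y "Z \<union> Y"]) auto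
  then show ?case by (simp add: Un_assoc)
qed simp

lemma trail_partition_Union:
  assumes "finite C" "disjoint C" "\<And>S. S \<in> C \<Longrightarrow> trail_partition S x y"
  shows "trail_partition (\<Union>C) x y"
  using assms
proof (induction rule: finite_induct)
  case (insert S C)
  have "S \<inter> \<Union>C = {}"
    using insert.prems(1) insert.hyps(2) by (auto simp: pairwise_def disjnt_def)
  moreover have "disjoint C"
    using insert.prems(1) by (rule pairwise_subset) auto
  ultimately show ?case
    using insert by (simp add: trail_partition_union)
qed (simp add: trail_partition.empty)

text \<open>The trails are concatenated alternately forwards and backwards.\<close>

lemma trail_partition_has_trail:
  "trail_partition X x y \<Longrightarrow> has_trail X x y \<or> has_trail X x x"
proof (induction rule: trail_partition.induct)
  case (empty x y)
  show ?case by (simp add: has_trail_empty)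
next
  case (union X x y Y)
  then show ?case
    using has_trail_union[of X x y Y x] has_trail_union[of Y x x X y] has_trail_sym[of Y x y]
    by (auto simp: Un_commute Int_commute)
qed

lemma trail_partition_absorb_loop:
  assumes "trail_partition W x y" "W \<noteq> {}" "has_trail L x x" "W \<inter> L = {}"
  shows "trail_partition (W \<union> L) x y"
proof -
  from assms(1,2) obtain X Y
    where W: "W = X \<union> Y" "has_trail X x y" "trail_partition Y x y" "X \<inter> Y = {}"
    by (cases rule: trail_partition.cases) auto
  have "has_trail (L \<union> X) x y" using has_trail_union[OF assms(3) W(2)] W(1) assms(4) by auto
  then have "trail_partition ((L \<union> X) \<union> Y) x y"
    using W assms(4) by (intro trail_partition.union[of "L \<union> X" x y Y]) auto
  then show ?thesis using W(1) by (simp add: Un_ac)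
qed

lemma trail_partition_triangle:
  assumes distinct: "a \<noteq> b" "b \<noteq> c" "a \<noteq> c"
    and parts: "trail_partition X a b" "trail_partition Y b c" "trail_partition Z c a"
    and disj: "X \<inter> Y = {}" "Y \<inter> Z = {}" "X \<inter> Z = {}" "{a, b, c} \<notin> X \<union> Y \<union> Z"
  shows "trail_partition (insert {a, b, c} (X \<union> Y \<union> Z)) a b"
proof -
  let ?r = "{a, b, c}"
  have r_ab: "has_trail {?r} a b" and r_ac: "has_trail {?r} a c" and r_cb: "has_trail {?r} c b"
    using distinct by (simp_all add: has_trail_singleton)
  have r_disjoint: "{?r} \<inter> X = {}" "{?r} \<inter> Y = {}" "{?r} \<inter> Z = {}"
    using disj(4) by simp_all
  have Y: "has_trail Y c b \<or> has_trail Y b b"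
    using trail_partition_has_trail[OF parts(2)] by (metis has_trail_sym)
  have Z: "has_trail Z a c \<or> has_trail Z a a"
    using trail_partition_has_trail[OF trail_partition_sym[OF parts(3)]] .
  have rY: "has_trail ({?r} \<union> Y) a b"
    using Y has_trail_union[OF r_ac _ r_disjoint(2)] has_trail_union[OF r_ab _ r_disjoint(2)]
    by blast
  have "trail_partition (insert ?r (Y \<union> Z)) a b"
  proof -
    consider "has_trail Z a a" | "has_trail Z a c" "has_trail Y c b"
      | "has_trail Z a c" "has_trail Y b b"
      using Y Z by blast
    then show ?thesis
    proof cases
      case 1
      have "Z \<inter> ({?r} \<union> Y) = {}" using disj(2) r_disjoint(3) by blast
      then have "has_trail (Z \<union> ({?r} \<union> Y)) a b" using has_trail_union[OF 1 rY] by blast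
      then show ?thesis by (intro trail_partition_trail) (simp add: Un_ac)
    next
      case 2
      have "has_trail (Z \<union> Y) a b" using has_trail_union[OF 2] disj(2) by blast
      moreover have "{?r} \<inter> (Z \<union> Y) = {}" using r_disjoint by blast
      ultimately have "trail_partition ({?r} \<union> (Z \<union> Y)) a b"
        using trail_partition.union[OF r_ab trail_partition_trail] by blast
      then show ?thesis by (simp add: Un_ac)
    next
      case 3
      have "has_trail (Z \<union> {?r}) a b"
        using has_trail_union[OF 3(1) r_cb] r_disjoint(3) by blast
      moreover have "(Z \<union> {?r}) \<inter> Y = {}" using disj(2) r_disjoint(2) by blast
      ultimately have "has_trail ((Z \<union> {?r}) \<union> Y) a b" using has_trail_union[OF _ 3(2)] by blast
      then show ?thesis by (intro trail_partition_trail) (simp add: Un_ac)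
    qed
  qed
  moreover have "insert ?r (Y \<union> Z) \<inter> X = {}" "insert ?r (Y \<union> Z) \<noteq> {}"
    using disj r_disjoint by blast+
  moreover have "has_trail X a b \<or> has_trail X a a"
    using trail_partition_has_trail[OF parts(1)] .
  ultimately have "trail_partition (insert ?r (Y \<union> Z) \<union> X) a b"
    using trail_partition_union[OF _ trail_partition_trail] trail_partition_absorb_loop
    by (metis Int_commute)
  then show ?thesis by (simp add: Un_ac)
qed

lemma disjoint_Union_subfamilies:
  assumes "disjoint C" "A \<subseteq> C" "B \<subseteq> C" "A \<inter> B = {}"
  shows "\<Union>A \<inter> \<Union>B = {}"
proof (intro equals0I)
  fix x assume "x \<in> \<Union>A \<inter> \<Union>B"
  then obtain S T where "S \<in> A" "T \<in> B" "x \<in> S" "x \<in> T" by blast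
  moreover have "S \<noteq> T" using \<open>S \<in> A\<close> \<open>T \<in> B\<close> assms(4) by blast
  ultimately show False using assms(1-3) unfolding pairwise_def disjnt_def by blast
qed

lemma trail_partition_insert_triangle:
  assumes distinct: "a \<noteq> b" "b \<noteq> c" "a \<noteq> c"
    and C: "finite C" "disjoint C" "{a, b, c} \<notin> \<Union>C"
    and parts: "\<And>S. S \<in> C \<Longrightarrow>
      \<exists>u v. u \<noteq> v \<and> u \<in> {a, b, c} \<and> v \<in> {a, b, c} \<and> trail_partition S u v"
  shows "trail_partition (insert {a, b, c} (\<Union>C)) a b"
proof -
  define CX where "CX = {S \<in> C. trail_partition S a b}"
  define CY where "CY = {S \<in> C - CX. trail_partition S b c}"
  define CZ where "CZ = C - CX - CY"
  have "trail_partition S a b \<or> trail_partition S b c \<or> trail_partition S c a" if S: "S \<in> C" for S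
  proof -
    obtain u v where "u \<noteq> v" "u \<in> {a, b, c}" "v \<in> {a, b, c}" "trail_partition S u v"
      using parts[OF S] by blast
    then show ?thesis using trail_partition_sym[of S u v] by auto
  qed
  then have Z: "trail_partition S c a" if "S \<in> CZ" for S
    using that unfolding CX_def CY_def CZ_def by blast
  have sub: "CX \<subseteq> C" "CY \<subseteq> C" "CZ \<subseteq> C" unfolding CX_def CY_def CZ_def by auto
  then have fin: "finite CX" "finite CY" "finite CZ"
    using C(1) finite_subset by blast+
  have disj: "disjoint CX" "disjoint CY" "disjoint CZ"
    using sub pairwise_subset[OF C(2)] by blast+
  have parts': "trail_partition (\<Union>CX) a b" "trail_partition (\<Union>CY) b c"
    "trail_partition (\<Union>CZ) c a"
    using trail_partition_Union[OF fin(1) disj(1)] trail_partition_Union[OF fin(2) disj(2)]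
      trail_partition_Union[OF fin(3) disj(3)] Z unfolding CX_def CY_def by blast+
  have "CX \<inter> CY = {}" "CY \<inter> CZ = {}" "CX \<inter> CZ = {}"
    unfolding CX_def CY_def CZ_def by auto
  then have "\<Union>CX \<inter> \<Union>CY = {}" "\<Union>CY \<inter> \<Union>CZ = {}" "\<Union>CX \<inter> \<Union>CZ = {}"
    using disjoint_Union_subfamilies[OF C(2)] sub by simp_all
  moreover have "\<Union>C = \<Union>CX \<union> \<Union>CY \<union> \<Union>CZ" unfolding CX_def CY_def CZ_def by blast
  ultimately show ?thesis
    using trail_partition_triangle[OF distinct parts'] C(3) by simp
qed

section \<open>The dual graph\<close>
definition dual_graph :: "'v set set \<Rightarrow> ('v set \<times> 'v set) set" where
  "dual_graph T = {(f, g). f \<in> T \<and> g \<in> T \<and> card (f \<inter> g) = 2}"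

definition dual_connected :: "'v set set \<Rightarrow> bool" where
  "dual_connected T \<longleftrightarrow> (\<forall>f\<in>T. \<forall>g\<in>T. (f, g) \<in> (dual_graph T)\<^sup>*)"

definition dual_component :: "'v set set \<Rightarrow> 'v set \<Rightarrow> 'v set set" where
  "dual_component T f = {g. (f, g) \<in> (dual_graph T)\<^sup>*}"

lemma sym_rtrancl_dual_graph: "sym ((dual_graph T)\<^sup>*)"
  by (rule sym_rtrancl) (auto simp: sym_def dual_graph_def Int_commute)

lemma rtrancl_dual_graph_mem: "(f, g) \<in> (dual_graph T)\<^sup>* \<Longrightarrow> f \<in> T \<Longrightarrow> g \<in> T"
  by (induction rule: rtrancl_induct) (auto simp: dual_graph_def)

lemma dual_component_subset: "f \<in> T \<Longrightarrow> dual_component T f \<subseteq> T"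
  unfolding dual_component_def using rtrancl_dual_graph_mem by blast

lemma dual_component_self: "f \<in> dual_component T f"
  unfolding dual_component_def by simp

lemma Union_dual_components: "\<Union>(dual_component T ` T) = T"
  using dual_component_subset dual_component_self by blast

lemma dual_component_eq:
  assumes "g \<in> dual_component T f"
  shows "dual_component T g = dual_component T f"
proof -
  have "(g, f) \<in> (dual_graph T)\<^sup>*"
    using assms sym_rtrancl_dual_graph unfolding dual_component_def sym_def by blast
  with assms show ?thesis
    unfolding dual_component_def by (blast intro: rtrancl_trans)
qed

lemma disjoint_dual_components: "disjoint (dual_component T ` A)"
  by (auto simp: pairwise_def disjnt_def dest: dual_component_eq)

lemma dual_connected_dual_component: "dual_connected (dual_component T f)"
proof -
  let ?C = "dual_component T f"
  have path: "(x, y) \<in> (dual_graph ?C)\<^sup>*" if "(x, y) \<in> (dual_graph T)\<^sup>*" "x \<in> ?C" for x y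
    using that
  proof (induction rule: rtrancl_induct)
    case (step y z)
    then have "y \<in> ?C" "z \<in> ?C"
      unfolding dual_component_def by (auto intro: rtrancl_trans)
    with step show ?case by (auto simp: dual_graph_def intro: rtrancl_into_rtrancl)
  qed simp
  show ?thesis
    unfolding dual_connected_def
    by (metis dual_component_eq dual_component_def dual_component_self mem_Collect_eq path)
qed

lemma dual_component_attached:
  "(f, r) \<in> (dual_graph T)\<^sup>* \<Longrightarrow> f \<in> T - {r} \<Longrightarrow>
   \<exists>g\<in>dual_component (T - {r}) f. card (g \<inter> r) = 2"
proof (induction rule: converse_rtrancl_induct)
  case (step x y)
  show ?case
  proof (cases "y = r")
    case True
    then show ?thesis using step(1) dual_component_self by (auto simp: dual_graph_def)
  next
    case False
    then have "(x, y) \<in> dual_graph (T - {r})" "y \<in> T - {r}"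
      using step(1) step.prems by (auto simp: dual_graph_def)
    moreover obtain g where "g \<in> dual_component (T - {r}) y" "card (g \<inter> r) = 2"
      using step.IH \<open>y \<in> T - {r}\<close> by blast
    ultimately show ?thesis
      unfolding dual_component_def by (blast intro: converse_rtrancl_into_rtrancl)
  qed
qed simp

lemma card_3_obtain_third:
  assumes "card r = 3" "a \<in> r" "b \<in> r" "a \<noteq> b"
  obtains c where "r = {a, b, c}" "c \<noteq> a" "c \<noteq> b"
proof -
  have "card (r - {a, b}) = 1" using assms by (simp add: card_Diff_subset)
  then obtain c where c: "r - {a, b} = {c}" by (auto simp: card_Suc_eq)
  then have "r = {a, b, c}" using assms by blast
  with c that show ?thesis by blast
qed

lemma trail_partition_dual_connected:
  assumes "finite T" "\<forall>f\<in>T. card f = 3" "dual_connected T" "r \<in> T" "a \<in> r" "b \<in> r" "a \<noteq> b"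
  shows "trail_partition T a b"
  using assms
proof (induction "card T" arbitrary: T r a b rule: less_induct)
  case less
  have "card r = 3" using less.prems(2,4) by simp
  then obtain c where r: "r = {a, b, c}" "c \<noteq> a" "c \<noteq> b"
    using less.prems(5-7) by (rule card_3_obtain_third)
  define C where "C = dual_component (T - {r}) ` (T - {r})"
  have UC: "\<Union>C = T - {r}"
    unfolding C_def by (rule Union_dual_components)
  have parts: "\<exists>u v. u \<noteq> v \<and> u \<in> r \<and> v \<in> r \<and> trail_partition S u v"
    if S: "S \<in> C" for S
  proof -
    obtain f where f: "f \<in> T - {r}" "S = dual_component (T - {r}) f"
      using S unfolding C_def by blast
    have "(f, r) \<in> (dual_graph T)\<^sup>*"
      using less.prems(3,4) f(1) unfolding dual_connected_def by simp
    then obtain g where g: "g \<in> S" "card (g \<inter> r) = 2"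
      using dual_component_attached[OF _ f(1)] f(2) by blast
    then obtain u v where uv: "g \<inter> r = {u, v}" "u \<noteq> v" unfolding card_2_iff by blast
    have "S \<subseteq> T - {r}" using UC S by blast
    then have "S \<subset> T" using less.prems(4) by blast
    then have "card S < card T" "finite S"
      using less.prems(1) psubset_card_mono finite_subset by blast+
    moreover have "\<forall>f\<in>S. card f = 3" using \<open>S \<subset> T\<close> less.prems(2) by blast
    moreover have "dual_connected S" using f(2) dual_connected_dual_component by simp
    moreover have "u \<in> g" "v \<in> g" "u \<in> r" "v \<in> r" using uv(1) by blast+
    ultimately have "trail_partition S u v"
      using less.hyps[of S g u v] g(1) uv(2) by blast
    then show ?thesis using \<open>u \<in> r\<close> \<open>v \<in> r\<close> uv(2) by blast
  qed
  have "a \<noteq> b" "b \<noteq> c" "a \<noteq> c" using r(2,3) less.prems(7) by auto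
  moreover have "finite C" unfolding C_def using less.prems(1) by simp
  moreover have "disjoint C" unfolding C_def by (rule disjoint_dual_components)
  moreover have "r \<notin> \<Union>C" using UC by blast
  ultimately have "trail_partition (insert r (\<Union>C)) a b"
    using parts unfolding r(1) by (rule trail_partition_insert_triangle)
  moreover have "insert r (\<Union>C) = T" using UC less.prems(4) by blast
  ultimately show ?case by simp
qed

lemma has_trail_dual_connected:
  assumes "finite T" "\<forall>f\<in>T. card f = 3" "dual_connected T" "T \<noteq> {}"
  obtains x y where "has_trail T x y"
proof -
  obtain r where r: "r \<in> T" using assms(4) by blast
  then have "card r = 3" using assms(2) by blast
  then obtain a b where ab: "a \<in> r" "b \<in> r" "a \<noteq> b" by (metis card_3_iff insertCI)
  have "trail_partition T a b"
    using trail_partition_dual_connected[OF assms(1-3) r ab] .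
  then show ?thesis using trail_partition_has_trail[of T a b] that by blast
qed

section \<open>The geometric realization\<close>

definition geometric_simplex :: "('v::finite) set \<Rightarrow> (real^'v) set" where
  "geometric_simplex f = convex hull ((\<lambda>v. axis v 1) ` f)"

lemma realization_eq_Union: "realization F = (\<Union>f\<in>F. geometric_simplex f)"
  unfolding realization_def geometric_simplex_def ..

lemma geometric_simplex_subset:
  "geometric_simplex f \<subseteq> {x. (\<forall>i. i \<notin> f \<longrightarrow> x $ i = 0) \<and> (\<Sum>i\<in>UNIV. x $ i) = 1}"
  unfolding geometric_simplex_def
proof (rule hull_minimal)
  show "(\<lambda>v. axis v 1) ` f \<subseteq> {x. (\<forall>i. i \<notin> f \<longrightarrow> x $ i = 0) \<and> (\<Sum>i\<in>UNIV. x $ i) = 1}"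
    by (auto simp: axis_def)
  show "convex {x :: real^'a. (\<forall>i. i \<notin> f \<longrightarrow> x $ i = 0) \<and> (\<Sum>i\<in>UNIV. x $ i) = 1}"
    unfolding convex_def by (simp add: sum.distrib flip: sum_distrib_left)
qed

text \<open>A common point has barycentric coordinates summing to 1 and supported on the common
  vertices.\<close>

lemma geometric_simplex_inter:
  assumes "card (f \<inter> g) \<le> 1" "x \<in> geometric_simplex f" "x \<in> geometric_simplex g"
  shows "\<exists>v\<in>f \<inter> g. x = axis v 1"
proof -
  have zero: "x $ i = 0" if "i \<notin> f \<inter> g" for i
    using assms(2,3) geometric_simplex_subset that by blast
  have sum: "(\<Sum>i\<in>UNIV. x $ i) = 1" using assms(2) geometric_simplex_subset by blast
  consider "f \<inter> g = {}" | v where "f \<inter> g = {v}"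
    using assms(1) by (metis card_0_eq card_1_singletonE finite le_Suc_eq One_nat_def le_zero_eq)
  then show ?thesis
  proof cases
    case 1
    then show ?thesis using sum zero by simp
  next
    case 2
    have "(\<Sum>i\<in>UNIV. x $ i) = x $ v"
      using zero 2 by (subst sum.remove[of UNIV v]) auto
    then have "x = axis v 1" using sum zero 2 by (auto simp: vec_eq_iff axis_def)
    then show ?thesis using 2 by blast
  qed
qed

lemma geometric_simplex_not_vertex:
  assumes "v \<in> f" "w \<in> f" "v \<noteq> w"
  shows "\<exists>x\<in>geometric_simplex f. x \<notin> range (\<lambda>u. axis u 1)"
proof -
  define m :: "real^'a" where "m = (1/2) *\<^sub>R axis v 1 + (1/2) *\<^sub>R axis w 1"
  have "m \<in> geometric_simplex f"
    unfolding m_def geometric_simplex_def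
    by (rule convexD) (auto intro: hull_inc simp: assms)
  moreover have "m $ v = 1/2" using assms(3) by (simp add: m_def axis_def)
  then have "m \<notin> range (\<lambda>u. axis u 1)" by (auto simp: axis_def split: if_splits)
  ultimately show ?thesis by blast
qed

lemma closed_realization: "finite F \<Longrightarrow> closed (realization F)"
  unfolding realization_eq_Union geometric_simplex_def
  by (intro closed_UN) (simp_all add: compact_imp_closed compact_convex_hull finite_imp_compact)

lemma connected_cball_minus_finite:
  fixes Q :: "(real^2) set"
  assumes "finite Q"
  shows "connected (cball 0 1 - Q)"
proof (rule connected_convex_diff_countable)
  show "\<not> collinear (cball (0::real^2) 1)" by (simp add: collinear_aff_dim aff_dim_cball)
qed (use assms countable_finite in auto)

lemma connected_Diff_homeomorphism:
  assumes "homeomorphism S T h g" "P \<subseteq> S" "connected (T - h ` P)"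
  shows "connected (S - P)"
proof -
  have "inj_on h S" using assms(1) unfolding homeomorphism_def by (metis inj_on_inverseI)
  then have "h ` (S - P) = T - h ` P"
    using assms(1,2) homeomorphism_image1 inj_on_image_set_diff by (metis Diff_subset)
  then have "homeomorphism (S - P) (T - h ` P) h g"
    using homeomorphism_of_subsets[OF assms(1), of "S - P" "{}"] by blast
  then show ?thesis using assms(3) homeomorphic_connectedness homeomorphic_def by blast
qed

lemma card_Int_le_1_if_not_adjacent:
  assumes "card f = 3" "card g = 3" "f \<noteq> g" "card (f \<inter> g) \<noteq> 2"
  shows "card (f \<inter> g) \<le> 1"
proof -
  have "finite f" using assms(1) card.infinite by fastforce
  then have "card (f \<inter> g) \<le> 3" using assms(1) card_mono[of f "f \<inter> g"] by auto
  moreover have "card (f \<inter> g) \<noteq> 3"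
  proof
    assume "card (f \<inter> g) = 3"
    then have "f \<inter> g = f" "f \<inter> g = g"
      using assms(1,2) card_subset_eq \<open>finite f\<close> card.infinite
      by (metis Int_lower1 zero_neq_numeral, metis Int_lower2 zero_neq_numeral)
    then show False using assms(3) by simp
  qed
  ultimately show ?thesis using assms(4) by linarith
qed

lemma card_Int_dual_component_le_1:
  assumes "\<forall>f\<in>F. card f = 3" "f0 \<in> F" "f \<in> dual_component F f0" "g \<in> F - dual_component F f0"
  shows "card (f \<inter> g) \<le> 1"
proof (rule card_Int_le_1_if_not_adjacent)
  show "card f = 3" "card g = 3" using assms dual_component_subset by blast+
  show "f \<noteq> g" using assms(3,4) by blast
  show "card (f \<inter> g) \<noteq> 2"
  proof
    assume "card (f \<inter> g) = 2"
    then have "(f, g) \<in> dual_graph F"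
      using assms(2-4) dual_component_subset unfolding dual_graph_def by blast
    then have "g \<in> dual_component F f0"
      using assms(3) unfolding dual_component_def by (simp add: rtrancl_into_rtrancl)
    then show False using assms(4) by blast
  qed
qed

text \<open>If the dual graph is disconnected, the realizations of a dual component and of its
  complement are closed sets meeting only in vertices.\<close>

lemma disconnected_realization_minus_vertices:
  fixes F :: "('v::finite) set set"
  assumes "finite F" "\<forall>f\<in>F. card f = 3" "\<not> dual_connected F"
  shows "\<not> connected (realization F - (\<lambda>v. axis v 1) ` verts F)"
proof -
  let ?P = "(\<lambda>v. axis v 1) ` verts F :: (real^'v) set"
  obtain f0 g0 where fg: "f0 \<in> F" "g0 \<in> F" "(f0, g0) \<notin> (dual_graph F)\<^sup>*"
    using assms(3) unfolding dual_connected_def by blast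
  define A where "A = dual_component F f0"
  define B where "B = F - A"
  have AB: "A \<subseteq> F" "B \<subseteq> F" "F = A \<union> B" "f0 \<in> A" "g0 \<in> B"
    using dual_component_subset[OF fg(1)] dual_component_self fg(2,3)
    unfolding A_def B_def dual_component_def by auto
  have small: "card (f \<inter> g) \<le> 1" if "f \<in> A" "g \<in> B" for f g
    using card_Int_dual_component_le_1 assms(2) fg(1) that unfolding A_def B_def by blast
  have meets: "realization E \<inter> (realization F - ?P) \<noteq> {}" if "f \<in> E" "E \<subseteq> F" for f E
  proof -
    have "card f = 3" using assms(2) that by blast
    then obtain v w where "v \<in> f" "w \<in> f" "v \<noteq> w" by (metis card_3_iff insertCI)
    then obtain x where "x \<in> geometric_simplex f" "x \<notin> range (\<lambda>u. axis u 1)"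
      using geometric_simplex_not_vertex by blast
    then show ?thesis using that unfolding realization_eq_Union by blast
  qed
  have apart: "realization A \<inter> realization B \<inter> (realization F - ?P) = {}"
  proof (intro equals0I)
    fix x assume "x \<in> realization A \<inter> realization B \<inter> (realization F - ?P)"
    then obtain f g where x: "f \<in> A" "g \<in> B" "x \<in> geometric_simplex f"
      "x \<in> geometric_simplex g" "x \<notin> ?P"
      unfolding realization_eq_Union by blast
    then obtain v where v: "v \<in> f \<inter> g" "x = axis v 1"
      using geometric_simplex_inter[OF small[OF x(1,2)] x(3,4)] by blast
    have "v \<in> verts F" using v(1) x(1) AB(1) unfolding verts_def by blast
    then show False using x(5) v(2) by blast
  qed
  have closed: "closed (realization A)" "closed (realization B)"
    using closed_realization finite_subset[OF _ assms(1)] AB(1,2) by blast+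
  have cover: "realization F - ?P \<subseteq> realization A \<union> realization B"
    using AB(3) unfolding realization_eq_Union by blast
  show ?thesis
    unfolding connected_closed using closed cover apart meets[OF AB(4,1)] meets[OF AB(5,2)] by blast
qed

lemma connected_realization_minus_vertices:
  fixes F :: "('v::finite) set set"
  assumes "homeomorphism (realization F) (cball (0::real^2) 1) h g"
  shows "connected (realization F - (\<lambda>v. axis v 1) ` verts F)"
proof (rule connected_Diff_homeomorphism[OF assms])
  show "(\<lambda>v. axis v 1) ` verts F \<subseteq> realization F"
    unfolding realization_def verts_def by (auto intro: hull_inc)
  show "connected (cball 0 1 - h ` (\<lambda>v. axis v 1) ` verts F)"
    by (rule connected_cball_minus_finite) simp
qed

lemma nonempty_if_homeomorphic_disk:
  assumes "homeomorphism (realization F) (cball (0::real^2) 1) h g"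
  shows "F \<noteq> {}"
proof
  assume "F = {}"
  then have "cball (0::real^2) 1 = {}"
    using homeomorphism_image1[OF assms] unfolding realization_def by simp
  then show False by simp
qed

section \<open>Scaffolds and facet paths\<close>

lemma path_arcs_Nil [simp]: "path_arcs vs [] = []"
  by (simp add: path_arcs_def)

lemma path_arcs_Cons [simp]:
  "path_arcs (v # w # vs) (f # fs) = (v, f) # (w, f) # path_arcs (w # vs) fs"
proof -
  have "[0..<length (f # fs)] = 0 # map Suc [0..<length fs]"
    by (simp add: upt_conv_Cons map_Suc_upt del: upt_Suc)
  then show ?thesis unfolding path_arcs_def by (simp add: comp_def)
qed

lemma path_arcs_trail_subset:
  "facet_trail vs fs \<Longrightarrow> set (path_arcs vs fs) \<subseteq> {(v, f). f \<in> set fs \<and> v \<in> f} \<inter> (set vs \<times> UNIV)"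
  by (induction vs fs rule: facet_trail.induct) auto

lemma distinct_path_arcs: "facet_trail vs fs \<Longrightarrow> distinct fs \<Longrightarrow> distinct (path_arcs vs fs)"
proof (induction vs fs rule: facet_trail.induct)
  case (2 v w vs f fs)
  then show ?case using path_arcs_trail_subset[of "w # vs" fs] by auto
qed auto

lemma facet_trail_facet_path:
  "facet_trail vs fs \<Longrightarrow> distinct fs \<Longrightarrow> set fs = F \<Longrightarrow> facet_path F vs fs"
  unfolding facet_path_def incidence_arcs_def
  using facet_trail_length path_arcs_trail_subset distinct_path_arcs by fast

lemma fdeg_path_arcs:
  "facet_trail vs fs \<Longrightarrow> distinct fs \<Longrightarrow> f \<in> set fs \<Longrightarrow> fdeg (set (path_arcs vs fs)) f = 2"
proof (induction vs fs rule: facet_trail.induct)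
  case (2 v w vs g fs)
  have "(u, g) \<notin> set (path_arcs (w # vs) fs)" for u
    using path_arcs_trail_subset[of "w # vs" fs] 2 by auto
  then have "{u. (u, f) \<in> set (path_arcs (v # w # vs) (g # fs))} =
      (if f = g then {v, w} else {u. (u, f) \<in> set (path_arcs (w # vs) fs)})"
    by auto
  then show ?case using 2 by (auto simp: fdeg_def)
qed auto

lemma odd_vdeg_path_arcs:
  "facet_trail vs fs \<Longrightarrow> distinct fs \<Longrightarrow>
   odd (vdeg (set (path_arcs vs fs)) u) \<longleftrightarrow> (u = hd vs) \<noteq> (u = last vs)"
proof (induction vs fs rule: facet_trail.induct)
  case (2 v w vs f fs)
  let ?A = "set (path_arcs (w # vs) fs)"
  have "(u, f) \<notin> ?A" using path_arcs_trail_subset[of "w # vs" fs] 2 by auto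
  moreover have "finite {g. (u, g) \<in> ?A}"
    by (rule finite_subset[of _ "snd ` ?A"]) force+
  moreover have "{g. (u, g) \<in> set (path_arcs (v # w # vs) (f # fs))} =
      (if u = v \<or> u = w then insert f {g. (u, g) \<in> ?A} else {g. (u, g) \<in> ?A})"
    by auto
  ultimately have "vdeg (set (path_arcs (v # w # vs) (f # fs))) u =
      (if u = v \<or> u = w then Suc (vdeg ?A u) else vdeg ?A u)"
    unfolding vdeg_def by auto
  then show ?case using 2 by auto
qed (auto simp: vdeg_def)

lemma subgraph_edges_rtrancl_sym:
  "(x, y) \<in> (subgraph_edges S)\<^sup>* \<Longrightarrow> (y, x) \<in> (subgraph_edges S)\<^sup>*"
proof -
  have "(subgraph_edges S)\<inverse> = subgraph_edges S" unfolding subgraph_edges_def by blast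
  then show "(x, y) \<in> (subgraph_edges S)\<^sup>* \<Longrightarrow> (y, x) \<in> (subgraph_edges S)\<^sup>*"
    by (metis rtrancl_converseI)
qed

lemma path_arcs_reach_from_hd:
  "facet_trail vs fs \<Longrightarrow> x \<in> Inl ` set vs \<union> Inr ` set fs \<Longrightarrow>
   (Inl (hd vs), x) \<in> (subgraph_edges (set (path_arcs vs fs)))\<^sup>*"
proof (induction vs fs arbitrary: x rule: facet_trail.induct)
  case (2 v w vs f fs)
  define E where "E = subgraph_edges (set (path_arcs (v # w # vs) (f # fs)))"
  have "set (path_arcs (w # vs) fs) \<subseteq> set (path_arcs (v # w # vs) (f # fs))" by auto
  then have sub: "subgraph_edges (set (path_arcs (w # vs) fs)) \<subseteq> E"
    unfolding E_def subgraph_edges_def by blast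
  have from_w: "(Inl w, y) \<in> E\<^sup>*" if "y \<in> Inl ` set (w # vs) \<union> Inr ` set fs" for y
  proof -
    have "(Inl w, y) \<in> (subgraph_edges (set (path_arcs (w # vs) fs)))\<^sup>*"
      using "2.IH"[of y] "2.prems"(1) that by simp
    then show ?thesis using rtrancl_mono[OF sub] by blast
  qed
  have vf: "(Inl v, Inr f) \<in> E" and fw: "(Inr f, Inl w) \<in> E"
    unfolding E_def subgraph_edges_def by auto
  consider "x = Inl v" | "x = Inr f" | "x \<in> Inl ` set (w # vs) \<union> Inr ` set fs"
    using "2.prems"(2) by auto
  then have "(Inl v, x) \<in> E\<^sup>*"
  proof cases
    case 3
    then show ?thesis using vf fw from_w by (simp add: converse_rtrancl_into_rtrancl)
  qed (use vf in auto)
  then show ?case by (simp add: E_def)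
qed auto

lemma facet_trail_scaffold:
  assumes trail: "facet_trail vs fs" "distinct fs" "set fs = F" and "F \<noteq> {}"
  defines "S \<equiv> set (path_arcs vs fs)"
  shows "scaffold F (set vs) S" "connected_subgraph F (set vs) S"
proof -
  have "set vs \<subseteq> verts F"
    using set_facet_trail_subset[OF trail(1)] trail(3) assms(4) unfolding verts_def by auto
  moreover have "card {v \<in> set vs. odd (vdeg S v)} \<le> 2"
  proof -
    have "{v \<in> set vs. odd (vdeg S v)} \<subseteq> {hd vs, last vs}"
      using odd_vdeg_path_arcs[OF trail(1,2)] unfolding S_def by auto
    moreover have "card {hd vs, last vs} \<le> 2" by (cases "hd vs = last vs") auto
    ultimately show ?thesis by (meson card_mono finite.emptyI finite.insertI le_trans)
  qed
  moreover have "S \<subseteq> incidence_arcs F" "\<forall>(v, f)\<in>S. v \<in> set vs"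
    using path_arcs_trail_subset[OF trail(1)] trail(3) unfolding S_def incidence_arcs_def by auto
  ultimately show "scaffold F (set vs) S"
    unfolding scaffold_def S_def using fdeg_path_arcs[OF trail(1,2)] trail(3) by simp
  have "(Inl (hd vs), x) \<in> (subgraph_edges S)\<^sup>*" if "x \<in> subgraph_nodes F (set vs)" for x
    using path_arcs_reach_from_hd[OF trail(1)] that trail(3) unfolding S_def subgraph_nodes_def by simp
  then show "connected_subgraph F (set vs) S"
    unfolding connected_subgraph_def by (meson rtrancl_trans subgraph_edges_rtrancl_sym)
qed
theorem mainTheorem5:
  fixes F :: "('v::finite) set set"
  assumes "triangulated_polygon_no_interior F"
  shows "(\<exists>Vs S. scaffold F Vs S \<and> connected_subgraph F Vs S) \<and>
         (\<exists>vs fs. facet_path F vs fs)"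
proof -
  obtain h g where disk: "homeomorphism (realization F) (cball (0::real^2) 1) h g"
    and F: "finite F" "\<forall>f\<in>F. card f = 3"
    using assms unfolding triangulated_polygon_no_interior_def by blast
  have "dual_connected F"
    using F disconnected_realization_minus_vertices connected_realization_minus_vertices[OF disk]
    by blast
  moreover have "F \<noteq> {}" using nonempty_if_homeomorphic_disk[OF disk] .
  ultimately obtain x y where "has_trail F x y"
    using has_trail_dual_connected[OF F] by blast
  then obtain vs fs where trail: "facet_trail vs fs" "distinct fs" "set fs = F"
    unfolding has_trail_def by blast
  show ?thesis
    using facet_trail_scaffold[OF trail \<open>F \<noteq> {}\<close>] facet_trail_facet_path[OF trail] by blast
qed
end
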